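(* There exist absolute positive constants $c,C$ such that the following holds. Let $n>10$ be an integer, $0<p<1/2$, and let $\varepsilon_1,\dots,\varepsilon_n$ be i.i.d. Bernoulli$(p)$ random variables, extended periodically by $\varepsilon_{j+n}=\varepsilon_j$. For integers $i$ let $X_i=\varepsilon_i\varepsilon_{i+1}$ (so $X_{i+n}=X_i$), and $W=\sum_{i=1}^nX_i$. Then for every positive integer $w\le cnp$ with $P(W=w)>0$, $$\sum_{i=1}^n\sum_{j\in\{i-1,i+1\}}E(X_iX_j\mid W=w)\le \frac{C}{np}\,w^2 .$$ *)

theory Defs
  imports "HOL-Probability.Probability"
begin

definition eps_pmf :: "nat \<Rightarrow> real \<Rightarrow> (int \<Rightarrow> bool) pmf" where
  "eps_pmf n p = Pi_pmf {1..int n} False (\<lambda>_. bernoulli_pmf p)"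

definition epsv :: "nat \<Rightarrow> (int \<Rightarrow> bool) \<Rightarrow> int \<Rightarrow> real" where
  "epsv n e i = (if e ((i - 1) mod int n + 1) then 1 else 0)"

definition Xv :: "nat \<Rightarrow> (int \<Rightarrow> bool) \<Rightarrow> int \<Rightarrow> real" where
  "Xv n e i = epsv n e i * epsv n e (i + 1)"

definition Wv :: "nat \<Rightarrow> (int \<Rightarrow> bool) \<Rightarrow> real" where
  "Wv n e = (\<Sum>i\<in>{1..int n}. Xv n e i)"

end

theory Submission
  imports Defs
begin

text \<open>
  Write \<open>q = (1 - p) / p\<close>.  All quantities are finite sums over the configurations
  \<open>e \<in> {0,1}^n\<close>, and the only probabilistic tool is the effect of switching a single site:
  for any weight \<open>g\<close>, switching site \<open>x\<close> on multiplies the probability by \<open>p / (1 - p)\<close>.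
  A pointwise inequality between a configuration and its switched version therefore becomes an
  inequality between (unnormalised) expectations restricted to events \<open>{W = v}\<close>.

  (1) Triples: every \<open>111\<close> pattern starting at \<open>i\<close> lies in a maximal run of ones; switching off
      the last one of that run lowers \<open>W\<close> by exactly one, so
      \<open>E[#111; W = v + 1] \<le> p/(1-p) \<cdot> v \<cdot> P(W = v)\<close>.
  (2) Ratio of consecutive levels: the number \<open>D\<close> of \<open>00\<close> pairs satisfies
      \<open>(n/3 - v) P(W = v) \<le> E[D; W = v] \<le> (3q + q\<^sup>2)(v + 1) P(W = v + 1)\<close>; the lower bound comes
      from counting sites and removing isolated ones, the upper bound from growing a \<open>11\<close> pair
      next to each \<open>00\<close> pair.  Hence \<open>P(W = v) \<le> 16 (v+1) P(W = v+1) / (n p\<^sup>2)\<close> for \<open>v \<le> n/12\<close>.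
  (3) The conditional sum in the theorem equals \<open>2 E[#111; W = w] / P(W = w)\<close>; combining (1) and
      (2) bounds it by \<open>64 w\<^sup>2 / (n p)\<close> whenever \<open>w \<le> n p / 10\<close>.
\<close>

section \<open>Cyclic indexing\<close>

definition site :: "nat \<Rightarrow> int \<Rightarrow> int" where
  "site n i = (i - 1) mod int n + 1"

lemma site_in: "n > 0 \<Longrightarrow> site n i \<in> {1..int n}"
proof -
  assume "n > 0"
  then have "0 \<le> (i - 1) mod int n" "(i - 1) mod int n < int n" by simp_all
  then show ?thesis unfolding site_def by simp
qed

lemma site_id: "i \<in> {1..int n} \<Longrightarrow> site n i = i"
  unfolding site_def by (auto simp: mod_pos_pos_trivial)

lemma site_site_add: "site n (site n x + a) = site n (x + a)"
proof -
  have "((x - 1) mod int n + a) mod int n = (x - 1 + a) mod int n"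
    by (rule mod_add_left_eq)
  then show ?thesis unfolding site_def by (simp add: algebra_simps)
qed

lemma site_period: "site n (x + int n) = site n x"
proof -
  have "x + int n - 1 = (x - 1) + int n" by simp
  then show ?thesis unfolding site_def by (simp only: mod_add_self2)
qed

lemma site_eq_iff: "site n x = site n y \<longleftrightarrow> x mod int n = y mod int n"
  unfolding site_def by (simp add: mod_eq_dvd_iff)

lemma site_neq:
  assumes "x \<noteq> y" and "\<bar>x - y\<bar> < int n"
  shows "site n x \<noteq> site n y"
proof
  assume "site n x = site n y"
  then have "int n dvd x - y" by (simp add: site_eq_iff mod_eq_dvd_iff)
  then have "\<bar>int n\<bar> \<le> \<bar>x - y\<bar>" using assms(1) by (intro dvd_imp_le_int) auto
  then show False using assms(2) by simp
qed

lemma periodic_site: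
  assumes per: "\<And>i. f (i + int n) = f i"
  shows "f (site n x) = f x"
proof -
  have shift: "f (y + int n * k) = f y" for y k
  proof (induction k rule: int_induct[where k = 0])
    case (step1 i)
    then show ?case using per[of "y + int n * i"] by (simp add: algebra_simps)
  next
    case (step2 i)
    then show ?case using per[of "y + int n * (i - 1)"] by (simp add: algebra_simps)
  qed simp
  have "site n x + int n * ((x - 1) div int n) = x"
    using mult_div_mod_eq[of "int n" "x - 1"] unfolding site_def by linarith
  then show ?thesis using shift[of "site n x" "(x - 1) div int n"] by simp
qed

lemma sum_shift:
  fixes f :: "int \<Rightarrow> real"
  assumes per: "\<And>i. f (i + int n) = f i" and n: "n > 0"
  shows "(\<Sum>i\<in>{1..int n}. f (i + a)) = (\<Sum>i\<in>{1..int n}. f i)"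
proof -
  have "(\<Sum>i\<in>{1..int n}. f (i + a)) = (\<Sum>i\<in>{1..int n}. f (site n (i + a)))"
    using periodic_site[of f n, OF per] by simp
  also have "\<dots> = (\<Sum>i\<in>{1..int n}. f i)"
  proof (rule sum.reindex_bij_witness[where i = "\<lambda>j. site n (j - a)" and j = "\<lambda>i. site n (i + a)"])
    fix i assume "i \<in> {1..int n}"
    then show "site n (site n (i + a) - a) = i"
      using site_site_add[of n "i + a" "- a"] site_id[of i n] by simp
  next
    fix j assume "j \<in> {1..int n}"
    then show "site n (site n (j - a) + a) = j"
      using site_site_add[of n "j - a" a] site_id[of j n] by simp
  qed (use site_in n in auto)
  finally show ?thesis .
qed

lemma sum_delta:
  fixes h :: "int \<Rightarrow> real"
  assumes per: "\<And>i. h (i + int n) = h i" and n: "n > 0" and m: "m \<in> {1..int n}"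
  shows "(\<Sum>i\<in>{1..int n}. if site n (i + a) = m then h i else 0) = h (m - a)"
proof -
  define g where "g j = (if site n j = m then h (j - a) else 0)" for j
  have per_g: "g (j + int n) = g j" for j
    unfolding g_def using per[of "j - a"] by (simp add: site_period algebra_simps)
  have "(\<Sum>i\<in>{1..int n}. if site n (i + a) = m then h i else 0) = (\<Sum>i\<in>{1..int n}. g (i + a))"
    unfolding g_def by (intro sum.cong) auto
  also have "\<dots> = (\<Sum>i\<in>{1..int n}. g i)" by (rule sum_shift[where f = g, OF per_g n])
  also have "\<dots> = (\<Sum>i\<in>{1..int n}. if i = m then h (m - a) else 0)"
    by (rule sum.cong) (auto simp: g_def site_id)
  finally show ?thesis using m by simp
qed

lemma epsv_site: "epsv n e x = (if e (site n x) then 1 else 0)"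
  unfolding epsv_def site_def ..

lemma epsv_01: "epsv n e x = 0 \<or> epsv n e x = 1"
  by (simp add: epsv_site)

lemma epsv_bounds [simp]: "0 \<le> epsv n e x" "epsv n e x \<le> 1"
  by (simp_all add: epsv_site)

lemma epsv_period: "epsv n e (x + int n) = epsv n e x"
  unfolding epsv_site site_period ..

lemma Xv_period: "Xv n e (x + int n) = Xv n e x"
  using epsv_period[of n e x] epsv_period[of n e "x + 1"] by (simp add: Xv_def algebra_simps)

lemma epsv_upd:
  "epsv n (e(site n x := b)) y = (if site n y = site n x then (if b then 1 else 0) else epsv n e y)"
  by (simp add: epsv_site)

text \<open>Switching on an empty site \<open>x\<close> raises \<open>W\<close> by the number of occupied neighbours of \<open>x\<close>
  (the two neighbours are different sites because \<open>n \<ge> 3\<close>).\<close>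

lemma W_set_true:
  assumes n: "n \<ge> 3" and ex: "\<not> e (site n x)"
  shows "Wv n (e(site n x := True)) = Wv n e + epsv n e (x - 1) + epsv n e (x + 1)"
proof -
  define d where "d j = (if site n j = site n x then 1 else (0::real))" for j
  have n0: "n > 0" and m: "site n x \<in> {1..int n}" using n site_in[of n x] by auto
  have eps': "epsv n (e(site n x := True)) j = epsv n e j + d j" for j
    using ex by (auto simp: epsv_site d_def)
  have right: "(\<Sum>i\<in>{1..int n}. d i * epsv n e (i + 1)) = epsv n e (x + 1)"
  proof -
    have "(\<Sum>i\<in>{1..int n}. d i * epsv n e (i + 1))
        = (\<Sum>i\<in>{1..int n}. if site n (i + 0) = site n x then epsv n e (i + 1) else 0)"
      by (intro sum.cong) (simp_all add: d_def)
    also have "\<dots> = epsv n e (site n x - 0 + 1)"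
    proof (rule sum_delta[OF _ n0 m])
      fix i
      show "epsv n e (i + int n + 1) = epsv n e (i + 1)"
        using epsv_period[of n e "i + 1"] by (simp add: ac_simps)
    qed
    finally show ?thesis by (simp add: epsv_site site_site_add)
  qed
  have left: "(\<Sum>i\<in>{1..int n}. d (i + 1) * epsv n e i) = epsv n e (x - 1)"
  proof -
    have "(\<Sum>i\<in>{1..int n}. d (i + 1) * epsv n e i)
        = (\<Sum>i\<in>{1..int n}. if site n (i + 1) = site n x then epsv n e i else 0)"
      by (intro sum.cong) (simp_all add: d_def)
    also have "\<dots> = epsv n e (site n x - 1)"
      by (rule sum_delta[OF _ n0 m]) (rule epsv_period)
    finally show ?thesis using site_site_add[of n x "-1"] by (simp add: epsv_site)
  qed
  have both: "d i * d (i + 1) = 0" for i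
    using site_neq[of i "i + 1" n] n by (auto simp: d_def)
  have "Wv n (e(site n x := True)) = (\<Sum>i\<in>{1..int n}.
      Xv n e i + d i * epsv n e (i + 1) + d (i + 1) * epsv n e i + d i * d (i + 1))"
    unfolding Wv_def Xv_def eps' by (intro sum.cong) (auto simp: algebra_simps)
  also have "\<dots> = Wv n e + epsv n e (x + 1) + epsv n e (x - 1)"
    unfolding Wv_def sum.distrib right left both by simp
  finally show ?thesis by simp
qed

lemma W_set_false:
  assumes n: "n \<ge> 3" and ex: "e (site n x)"
  shows "Wv n (e(site n x := False)) = Wv n e - epsv n e (x - 1) - epsv n e (x + 1)"
proof -
  let ?e0 = "e(site n x := False)"
  have "?e0(site n x := True) = e" using ex by (simp add: fun_upd_idem)
  moreover have "epsv n ?e0 (x - 1) = epsv n e (x - 1)" "epsv n ?e0 (x + 1) = epsv n e (x + 1)"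
    using site_neq[of "x - 1" x n] site_neq[of "x + 1" x n] n by (auto simp: epsv_upd)
  ultimately show ?thesis using W_set_true[OF n, of ?e0 x] by simp
qed

section \<open>Expectations as finite sums and the one-site switch\<close>

definition cfgs :: "nat \<Rightarrow> (int \<Rightarrow> bool) set" where
  "cfgs n = {e. \<forall>x. x \<notin> {1..int n} \<longrightarrow> \<not> e x}"

definition expect :: "nat \<Rightarrow> real \<Rightarrow> ((int \<Rightarrow> bool) \<Rightarrow> real) \<Rightarrow> real" where
  "expect n p f = (\<Sum>e\<in>cfgs n. pmf (eps_pmf n p) e * f e)"

lemma finite_cfgs: "finite (cfgs n)"
proof -
  have "cfgs n = PiE_dflt {1..int n} False (\<lambda>_. UNIV)"
    unfolding cfgs_def PiE_dflt_def by auto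
  then show ?thesis by (simp add: finite_PiE_dflt)
qed

lemma set_eps_pmf: "set_pmf (eps_pmf n p) \<subseteq> cfgs n"
  unfolding eps_pmf_def cfgs_def using set_Pi_pmf_subset[of "{1..int n}" False] by auto

lemma pmf_eps:
  "e \<in> cfgs n \<Longrightarrow> pmf (eps_pmf n p) e = (\<Prod>x\<in>{1..int n}. pmf (bernoulli_pmf p) (e x))"
  unfolding eps_pmf_def cfgs_def by (subst pmf_Pi') auto

lemma cfgs_upd: "e \<in> cfgs n \<Longrightarrow> m \<in> {1..int n} \<Longrightarrow> e(m := b) \<in> cfgs n"
  unfolding cfgs_def by auto

lemma expect_add: "expect n p (\<lambda>e. f e + g e) = expect n p f + expect n p g"
  unfolding expect_def by (simp add: distrib_left sum.distrib)

lemma expect_cmult: "expect n p (\<lambda>e. c * f e) = c * expect n p f"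
  unfolding expect_def by (simp add: sum_distrib_left algebra_simps)

lemma expect_sum: "expect n p (\<lambda>e. \<Sum>i\<in>I. f i e) = (\<Sum>i\<in>I. expect n p (f i))"
  unfolding expect_def by (simp add: sum_distrib_left sum.swap[of _ I])

lemma expect_mono: "(\<And>e. e \<in> cfgs n \<Longrightarrow> f e \<le> g e) \<Longrightarrow> expect n p f \<le> expect n p g"
  unfolding expect_def by (intro sum_mono mult_left_mono) auto

lemma expect_cong: "(\<And>e. e \<in> cfgs n \<Longrightarrow> f e = g e) \<Longrightarrow> expect n p f = expect n p g"
  unfolding expect_def by (intro sum.cong) auto

lemma expect_nonneg: "(\<And>e. e \<in> cfgs n \<Longrightarrow> 0 \<le> f e) \<Longrightarrow> 0 \<le> expect n p f"
  unfolding expect_def by (intro sum_nonneg mult_nonneg_nonneg) auto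

lemma pmf_set_true:
  assumes e: "e \<in> cfgs n" and m: "m \<in> {1..int n}" and em: "\<not> e m" and p: "0 \<le> p" "p \<le> 1"
  shows "(1 - p) * pmf (eps_pmf n p) (e(m := True)) = p * pmf (eps_pmf n p) e"
proof -
  let ?B = "pmf (bernoulli_pmf p)"
  let ?rest = "\<Prod>x\<in>{1..int n} - {m}. ?B (e x)"
  have "pmf (eps_pmf n p) (e(m := True)) = ?B True * (\<Prod>x\<in>{1..int n} - {m}. ?B ((e(m := True)) x))"
    by (simp only: pmf_eps[OF cfgs_upd[OF e m]] prod.remove[OF finite_atLeastAtMost_int m]) simp
  also have "(\<Prod>x\<in>{1..int n} - {m}. ?B ((e(m := True)) x)) = ?rest"
    by (rule prod.cong) auto
  finally have set: "pmf (eps_pmf n p) (e(m := True)) = p * ?rest"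
    by (simp only: pmf_bernoulli_True[OF p])
  have "pmf (eps_pmf n p) e = ?B (e m) * ?rest"
    by (simp only: pmf_eps[OF e] prod.remove[OF finite_atLeastAtMost_int m])
  then have unset: "pmf (eps_pmf n p) e = (1 - p) * ?rest" using p em by simp
  show ?thesis unfolding set unset by simp
qed

text \<open>The switch identity: the configurations with site \<open>x\<close> occupied are exactly the images of those
  with \<open>x\<close> empty under switching \<open>x\<close> on, and the weights differ by the factor \<open>p / (1 - p)\<close>.\<close>

lemma expect_set_true:
  assumes n: "n > 0" and p: "0 < p" "p < 1"
  shows "expect n p (\<lambda>e. g e * epsv n e x)
       = p / (1 - p) * expect n p (\<lambda>e. g (e(site n x := True)) * (1 - epsv n e x))"
proof -
  define m where "m = site n x"
  have m: "m \<in> {1..int n}" unfolding m_def using site_in[OF n] .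
  let ?P = "pmf (eps_pmf n p)" and ?set = "\<lambda>e. e(m := True)"
  let ?S0 = "{e \<in> cfgs n. \<not> e m}" and ?S1 = "{e \<in> cfgs n. e m}"
  have em: "epsv n e x = (if e m then 1 else 0)" for e by (simp add: epsv_site m_def)
  have image: "?S1 = ?set ` ?S0"
  proof
    show "?S1 \<subseteq> ?set ` ?S0"
    proof
      fix e assume e: "e \<in> ?S1"
      then have "e = ?set (e(m := False))" by (auto simp: fun_eq_iff)
      moreover have "e(m := False) \<in> ?S0" using e cfgs_upd[OF _ m] by auto
      ultimately show "e \<in> ?set ` ?S0" by blast
    qed
  qed (use cfgs_upd[OF _ m] in auto)
  have inj: "inj_on ?set ?S0"
  proof (rule inj_onI)
    fix e e' assume S0: "e \<in> ?S0" "e' \<in> ?S0" and eq: "?set e = ?set e'"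
    show "e = e'"
    proof
      fix z show "e z = e' z" using fun_cong[OF eq, of z] S0 by (cases "z = m") auto
    qed
  qed
  have "expect n p (\<lambda>e. g e * epsv n e x) = (\<Sum>e\<in>?S1. ?P e * g e)"
    unfolding expect_def using finite_cfgs by (subst sum.inter_filter) (auto intro!: sum.cong simp: em)
  also have "\<dots> = (\<Sum>e\<in>?S0. ?P (?set e) * g (?set e))"
    unfolding image by (simp add: sum.reindex[OF inj])
  also have "\<dots> = (\<Sum>e\<in>?S0. p / (1 - p) * (?P e * g (?set e)))"
  proof (rule sum.cong)
    fix e assume "e \<in> ?S0"
    then have "(1 - p) * ?P (?set e) = p * ?P e" using pmf_set_true[of e n m p] m p by auto
    then have "?P (?set e) = p / (1 - p) * ?P e" using p by (simp add: field_simps)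
    then show "?P (?set e) * g (?set e) = p / (1 - p) * (?P e * g (?set e))" by simp
  qed simp
  also have "\<dots> = p / (1 - p) * expect n p (\<lambda>e. g (?set e) * (1 - epsv n e x))"
    unfolding expect_def sum_distrib_left using finite_cfgs
    by (subst sum.inter_filter) (auto intro!: sum.cong simp: em)
  finally show ?thesis unfolding m_def .
qed

lemma flip_up_bound:
  assumes n: "n > 0" and p: "0 < p" "p < 1"
    and move: "\<And>e. e \<in> cfgs n \<Longrightarrow> f e \<le> g (e(site n x := True)) * (1 - epsv n e x)"
    and g: "\<And>e. e \<in> cfgs n \<Longrightarrow> 0 \<le> g e"
  shows "expect n p f \<le> (1 - p) / p * expect n p g"
proof -
  have "expect n p f \<le> expect n p (\<lambda>e. g (e(site n x := True)) * (1 - epsv n e x))"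
    by (rule expect_mono[OF move])
  also have "\<dots> = (1 - p) / p * expect n p (\<lambda>e. g e * epsv n e x)"
    using expect_set_true[OF n p, of g x] p by (simp add: field_simps)
  also have "\<dots> \<le> (1 - p) / p * expect n p g"
  proof (rule mult_left_mono[OF expect_mono])
    fix e assume "e \<in> cfgs n"
    then show "g e * epsv n e x \<le> g e" using g[of e] epsv_01[of n e x] by auto
  qed (use p in simp)
  finally show ?thesis .
qed

lemma flip_down_bound:
  assumes n: "n > 0" and p: "0 < p" "p < 1"
    and move: "\<And>e. e \<in> cfgs n \<Longrightarrow> f e \<le> g (e(site n x := False)) * epsv n e x"
    and g: "\<And>e. e \<in> cfgs n \<Longrightarrow> 0 \<le> g e"
  shows "expect n p f \<le> p / (1 - p) * expect n p g"
proof -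
  have "expect n p f \<le> expect n p (\<lambda>e. g (e(site n x := False)) * epsv n e x)"
    by (rule expect_mono[OF move])
  also have "\<dots> = p / (1 - p) * expect n p (\<lambda>e. g (e(site n x := False)) * (1 - epsv n e x))"
    using expect_set_true[OF n p, of "\<lambda>e. g (e(site n x := False))" x] by simp
  also have "\<dots> \<le> p / (1 - p) * expect n p g"
  proof (rule mult_left_mono[OF expect_mono])
    fix e assume "e \<in> cfgs n"
    then show "g (e(site n x := False)) * (1 - epsv n e x) \<le> g e"
      using g[of e] by (cases "e (site n x)") (auto simp: epsv_site fun_upd_idem)
  qed (use p in simp)
  finally show ?thesis .
qed

text \<open>Indicator of the event \<open>{W = v}\<close>; \<open>expect n p (\<lambda>e. f e * indW n v e)\<close> is \<open>E[f; W = v]\<close>.\<close>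

definition indW :: "nat \<Rightarrow> nat \<Rightarrow> (int \<Rightarrow> bool) \<Rightarrow> real" where
  "indW n v e = (if Wv n e = real v then 1 else 0)"

lemma prob_W: "measure_pmf.prob (eps_pmf n p) {e. Wv n e = real v} = expect n p (indW n v)"
proof -
  have "measure_pmf.prob (eps_pmf n p) {e. Wv n e = real v}
      = measure_pmf.expectation (eps_pmf n p) (indW n v)"
  proof -
    have "indW n v = indicator {e. Wv n e = real v}"
      by (auto simp: indW_def indicator_def)
    then show ?thesis by simp
  qed
  also have "\<dots> = expect n p (indW n v)"
    unfolding expect_def using finite_cfgs set_eps_pmf
    by (subst integral_measure_pmf_real[of "cfgs n"]) (auto simp: mult.commute)
  finally show ?thesis .
qed

lemma cond_expectation_W:
  assumes pos: "measure_pmf.prob (eps_pmf n p) {e. Wv n e = real w} > 0"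
  shows "measure_pmf.expectation (cond_pmf (eps_pmf n p) {e. Wv n e = real w}) f
       = expect n p (\<lambda>e. f e * indW n w e) / expect n p (indW n w)"
proof -
  let ?A = "{e. Wv n e = real w}"
  have ne: "set_pmf (eps_pmf n p) \<inter> ?A \<noteq> {}"
    using pos measure_pmf_zero_iff[of "eps_pmf n p" ?A] by auto
  have sub: "set_pmf (cond_pmf (eps_pmf n p) ?A) \<subseteq> cfgs n"
    using set_cond_pmf[OF ne] set_eps_pmf by auto
  have "measure_pmf.expectation (cond_pmf (eps_pmf n p) ?A) f
      = (\<Sum>e\<in>cfgs n. f e * pmf (cond_pmf (eps_pmf n p) ?A) e)"
    by (rule integral_measure_pmf_real) (use finite_cfgs sub in auto)
  also have "\<dots> = (\<Sum>e\<in>cfgs n. pmf (eps_pmf n p) e * (f e * indW n w e) / expect n p (indW n w))"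
    by (rule sum.cong) (auto simp: pmf_cond[OF ne] prob_W indW_def)
  finally show ?thesis unfolding expect_def by (simp add: sum_divide_distrib)
qed

lemma sum_X_shift: "n > 0 \<Longrightarrow> (\<Sum>i\<in>{1..int n}. Xv n e (i + a)) = Wv n e"
  unfolding Wv_def by (rule sum_shift) (rule Xv_period)

lemma expect_W: "expect n p (\<lambda>e. Wv n e * indW n v e) = real v * expect n p (indW n v)"
  unfolding expect_cmult[symmetric] by (rule expect_cong) (simp add: indW_def)

lemma sum_expect_X:
  assumes "n > 0"
  shows "(\<Sum>i\<in>{1..int n}. expect n p (\<lambda>e. Xv n e (i + a) * indW n v e)) = real v * expect n p (indW n v)"
proof -
  have "(\<Sum>i\<in>{1..int n}. expect n p (\<lambda>e. Xv n e (i + a) * indW n v e))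
      = expect n p (\<lambda>e. Wv n e * indW n v e)"
    unfolding expect_sum[symmetric] sum_distrib_right[symmetric] sum_X_shift[OF assms] ..
  then show ?thesis by (simp only: expect_W)
qed

section \<open>Comparing consecutive levels of \<open>W\<close>\<close>

definition zero_pairs :: "nat \<Rightarrow> (int \<Rightarrow> bool) \<Rightarrow> real" where
  "zero_pairs n e = (\<Sum>i\<in>{1..int n}. (1 - epsv n e i) * (1 - epsv n e (i + 1)))"

definition lonely :: "nat \<Rightarrow> (int \<Rightarrow> bool) \<Rightarrow> int \<Rightarrow> real" where
  "lonely n e i = (1 - epsv n e (i - 1)) * epsv n e i * (1 - epsv n e (i + 1))"

text \<open>Counting the \<open>n\<close> adjacent pairs: each is empty, or contains an isolated one, or touches an
  occupied pair.  This is where the linear term \<open>n\<close> of the lower bound comes from.\<close>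

lemma site_count:
  assumes "n > 0"
  shows "real n \<le> zero_pairs n e + 2 * (\<Sum>i\<in>{1..int n}. lonely n e i) + 3 * Wv n e"
proof -
  have local: "1 \<le> (1 - epsv n e i) * (1 - epsv n e (i + 1)) + lonely n e (i + 0) + lonely n e (i + 1)
                 + Xv n e (i + -1) + Xv n e (i + 0) + Xv n e (i + 1)" for i
    using epsv_01[of n e "i - 1"] epsv_01[of n e i] epsv_01[of n e "i + 1"] epsv_01[of n e "i + 2"]
    by (auto simp: lonely_def Xv_def add.assoc)
  have lonely_period: "lonely n e (i + int n) = lonely n e i" for i
    using epsv_period[of n e "i - 1"] epsv_period[of n e i] epsv_period[of n e "i + 1"]
    by (simp add: lonely_def algebra_simps)
  have "real n = (\<Sum>i\<in>{1..int n}. 1)" by simp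
  also have "\<dots> \<le> (\<Sum>i\<in>{1..int n}. (1 - epsv n e i) * (1 - epsv n e (i + 1)) + lonely n e (i + 0)
        + lonely n e (i + 1) + Xv n e (i + -1) + Xv n e (i + 0) + Xv n e (i + 1))"
    by (rule sum_mono) (rule local)
  also have "\<dots> = zero_pairs n e + 2 * (\<Sum>i\<in>{1..int n}. lonely n e i) + 3 * Wv n e"
    unfolding sum.distrib sum_X_shift[OF assms] sum_shift[where f = "lonely n e", OF lonely_period assms]
    by (simp add: zero_pairs_def)
  finally show ?thesis .
qed

text \<open>Removing an isolated one does not change \<open>W\<close>.\<close>

lemma lonely_death:
  assumes n: "n \<ge> 3" and p: "0 < p" "p < 1"
  shows "expect n p (\<lambda>e. lonely n e i * indW n v e)
       \<le> p / (1 - p) * expect n p (\<lambda>e. (1 - epsv n e (i - 1)) * (1 - epsv n e i) * (1 - epsv n e (i + 1)) * indW n v e)"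
proof (rule flip_down_bound[where x = i])
  fix e
  let ?e' = "e(site n i := False)"
  have nbr: "epsv n ?e' (i - 1) = epsv n e (i - 1)" "epsv n ?e' (i + 1) = epsv n e (i + 1)"
    using site_neq[of "i - 1" i n] site_neq[of "i + 1" i n] n by (auto simp: epsv_upd)
  show "lonely n e i * indW n v e \<le> (1 - epsv n ?e' (i - 1)) * (1 - epsv n ?e' i) * (1 - epsv n ?e' (i + 1)) * indW n v ?e' * epsv n e i"
  proof (cases "e (site n i)")
    case True
    then show ?thesis
      unfolding nbr indW_def W_set_false[where e = e and x = i, OF n True] lonely_def
      using epsv_01[of n e "i - 1"] epsv_01[of n e "i + 1"] by (auto simp: epsv_site)
  next
    case False
    then show ?thesis by (simp add: lonely_def epsv_site)
  qed
qed (use n p epsv_01 in \<open>auto simp: indW_def\<close>)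

lemma lonely_le_zero_pairs:
  assumes n: "n \<ge> 3" and p: "0 < p" "p < 1/2"
  shows "(\<Sum>i\<in>{1..int n}. expect n p (\<lambda>e. lonely n e i * indW n v e))
       \<le> expect n p (\<lambda>e. zero_pairs n e * indW n v e)"
proof -
  let ?I = "indW n v" and ?Z = "\<lambda>i e. (1 - epsv n e i) * (1 - epsv n e (i + 1)) * indW n v e"
  have "expect n p (\<lambda>e. lonely n e i * ?I e) \<le> expect n p (?Z i)" for i
  proof -
    let ?E3 = "\<lambda>e. (1 - epsv n e (i - 1)) * (1 - epsv n e i) * (1 - epsv n e (i + 1)) * ?I e"
    have E3_nonneg: "0 \<le> expect n p ?E3"
      by (auto intro!: expect_nonneg mult_nonneg_nonneg simp: indW_def)
    have "expect n p (\<lambda>e. lonely n e i * ?I e) \<le> p / (1 - p) * expect n p ?E3"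
      using lonely_death[OF n] p by simp
    also have "\<dots> \<le> expect n p ?E3"
      using mult_right_mono[OF _ E3_nonneg, of "p / (1 - p)" 1] p by (simp add: field_simps)
    also have "\<dots> \<le> expect n p (?Z i)"
    proof (rule expect_mono)
      fix e
      have "(1 - epsv n e (i - 1)) * ((1 - epsv n e i) * (1 - epsv n e (i + 1)))
          \<le> (1 - epsv n e i) * (1 - epsv n e (i + 1))"
        by (rule mult_left_le_one_le) simp_all
      then show "?E3 e \<le> ?Z i e" by (simp add: indW_def mult.assoc)
    qed
    finally show ?thesis .
  qed
  then have "(\<Sum>i\<in>{1..int n}. expect n p (\<lambda>e. lonely n e i * ?I e)) \<le> (\<Sum>i\<in>{1..int n}. expect n p (?Z i))"
    by (rule sum_mono)
  also have "\<dots> = expect n p (\<lambda>e. zero_pairs n e * ?I e)"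
    unfolding expect_sum[symmetric] zero_pairs_def by (simp add: sum_distrib_right)
  finally show ?thesis .
qed

lemma zero_pairs_lower:
  assumes n: "n \<ge> 3" and p: "0 < p" "p < 1/2"
  shows "(real n / 3 - real v) * expect n p (indW n v) \<le> expect n p (\<lambda>e. zero_pairs n e * indW n v e)"
proof -
  let ?I = "indW n v" and ?D = "\<lambda>e. zero_pairs n e * indW n v e"
  have n0: "n > 0" using n by simp
  have "real n * expect n p ?I
      \<le> expect n p (\<lambda>e. zero_pairs n e * ?I e + 2 * (\<Sum>i\<in>{1..int n}. lonely n e i * ?I e) + 3 * (Wv n e * ?I e))"
    unfolding expect_cmult[symmetric]
  proof (rule expect_mono)
    fix e
    show "real n * ?I e \<le> zero_pairs n e * ?I e + 2 * (\<Sum>i\<in>{1..int n}. lonely n e i * ?I e) + 3 * (Wv n e * ?I e)"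
      using site_count[OF n0, of e] by (simp add: indW_def sum_distrib_right[symmetric])
  qed
  also have "\<dots> = expect n p ?D + 2 * (\<Sum>i\<in>{1..int n}. expect n p (\<lambda>e. lonely n e i * ?I e)) + 3 * (real v * expect n p ?I)"
    unfolding expect_add expect_cmult expect_sum expect_W ..
  finally show ?thesis using lonely_le_zero_pairs[OF n p, of v] by (simp add: algebra_simps)
qed

text \<open>An empty pair with an occupied site \<open>y\<close> on one side: switching on the site \<open>x\<close> next to \<open>y\<close>
  creates exactly one new occupied pair.\<close>

lemma attach_one:
  assumes n: "n \<ge> 3" and p: "0 < p" "p < 1"
    and nbrs: "y = x - 1 \<and> z = x + 1 \<or> y = x + 1 \<and> z = x - 1"
  shows "expect n p (\<lambda>e. epsv n e y * (1 - epsv n e x) * (1 - epsv n e z) * indW n v e)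
       \<le> (1 - p) / p * expect n p (\<lambda>e. epsv n e y * epsv n e x * indW n (Suc v) e)"
proof (rule flip_up_bound[where x = x])
  fix e
  let ?e' = "e(site n x := True)"
  have "site n y \<noteq> site n x" "site n z \<noteq> site n x"
    using nbrs n site_neq[of y x n] site_neq[of z x n] by auto
  then have nbr: "epsv n ?e' y = epsv n e y" "epsv n ?e' z = epsv n e z" "epsv n ?e' x = 1"
    by (simp_all add: epsv_upd)
  show "epsv n e y * (1 - epsv n e x) * (1 - epsv n e z) * indW n v e
      \<le> epsv n ?e' y * epsv n ?e' x * indW n (Suc v) ?e' * (1 - epsv n e x)"
  proof (cases "e (site n x)")
    case False
    have "Wv n ?e' = Wv n e + epsv n e y + epsv n e z"
      using W_set_true[where e = e and x = x, OF n False] nbrs by auto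
    then show ?thesis unfolding nbr indW_def
      using False epsv_01[of n e y] epsv_01[of n e z] by (auto simp: epsv_site)
  qed (simp add: epsv_site)
qed (use n p in \<open>auto simp: indW_def\<close>)

text \<open>Four empty sites in a row: first place an isolated one at \<open>j + 2\<close> (no change of \<open>W\<close>),
  then attach a neighbour to it.\<close>

lemma fill_gap:
  assumes n: "n \<ge> 3" and p: "0 < p" "p < 1"
  shows "expect n p (\<lambda>e. (1 - epsv n e j) * (1 - epsv n e (j + 1)) * (1 - epsv n e (j + 2)) * (1 - epsv n e (j + 3)) * indW n v e)
       \<le> ((1 - p) / p)^2 * expect n p (\<lambda>e. Xv n e (j + 1) * indW n (Suc v) e)"
proof -
  let ?q = "(1 - p) / p"
  let ?g = "\<lambda>e. epsv n e (j + 2) * (1 - epsv n e (j + 1)) * (1 - epsv n e j) * indW n v e"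
  have "expect n p (\<lambda>e. (1 - epsv n e j) * (1 - epsv n e (j + 1)) * (1 - epsv n e (j + 2)) * (1 - epsv n e (j + 3)) * indW n v e)
      \<le> ?q * expect n p ?g"
  proof (rule flip_up_bound[where x = "j + 2"])
    fix e
    let ?e' = "e(site n (j + 2) := True)"
    have "site n j \<noteq> site n (j + 2)" "site n (j + 1) \<noteq> site n (j + 2)"
      using n site_neq[of j "j + 2" n] site_neq[of "j + 1" "j + 2" n] by auto
    then have nbr: "epsv n ?e' j = epsv n e j" "epsv n ?e' (j + 1) = epsv n e (j + 1)"
        "epsv n ?e' (j + 2) = 1"
      by (simp_all add: epsv_upd)
    show "(1 - epsv n e j) * (1 - epsv n e (j + 1)) * (1 - epsv n e (j + 2)) * (1 - epsv n e (j + 3)) * indW n v e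
        \<le> ?g ?e' * (1 - epsv n e (j + 2))"
    proof (cases "e (site n (j + 2))")
      case False
      have h: "j + 2 - 1 = j + 1" "j + 2 + 1 = j + 3" by simp_all
      have "Wv n ?e' = Wv n e + epsv n e (j + 1) + epsv n e (j + 3)"
        using W_set_true[where e = e and x = "j + 2", OF n False] unfolding h .
      then show ?thesis unfolding nbr indW_def
        using False epsv_01[of n e j] epsv_01[of n e "j + 1"] epsv_01[of n e "j + 3"]
        by (auto simp: epsv_site)
    qed (simp add: epsv_site)
  qed (use n p in \<open>auto simp: indW_def\<close>)
  also have "\<dots> \<le> ?q * (?q * expect n p (\<lambda>e. Xv n e (j + 1) * indW n (Suc v) e))"
  proof (rule mult_left_mono)
    show "expect n p ?g \<le> ?q * expect n p (\<lambda>e. Xv n e (j + 1) * indW n (Suc v) e)"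
      using attach_one[OF n p, of "j + 2" "j + 1" j v] by (simp add: Xv_def add.assoc mult.commute)
  qed (use p in simp)
  finally show ?thesis by (simp add: power2_eq_square mult.assoc)
qed

text \<open>Each empty pair is followed, within distance three, by an occupied site or by a block of four
  empty sites; in each case one of the previous moves applies.\<close>

lemma zero_pair_bound:
  fixes j :: int and v :: nat
  assumes n: "n \<ge> 3" and p: "0 < p" "p < 1"
  defines "q \<equiv> (1 - p) / p" and "X' \<equiv> \<lambda>a. expect n p (\<lambda>e. Xv n e (j + a) * indW n (Suc v) e)"
  shows "expect n p (\<lambda>e. (1 - epsv n e j) * (1 - epsv n e (j + 1)) * indW n v e)
       \<le> q * X' (-1) + q^2 * X' 1 + q * X' 1 + q * X' 2"
proof -
  let ?I = "indW n v"
  let ?A = "\<lambda>e. epsv n e (j - 1) * (1 - epsv n e j) * (1 - epsv n e (j + 1)) * ?I e"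
  let ?N = "\<lambda>e. (1 - epsv n e j) * (1 - epsv n e (j + 1)) * (1 - epsv n e (j + 2)) * (1 - epsv n e (j + 3)) * ?I e"
  let ?B = "\<lambda>e. epsv n e (j + 2) * (1 - epsv n e (j + 1)) * (1 - epsv n e j) * ?I e"
  let ?C = "\<lambda>e. epsv n e (j + 3) * (1 - epsv n e (j + 2)) * (1 - epsv n e (j + 1)) * ?I e"
  have "expect n p (\<lambda>e. (1 - epsv n e j) * (1 - epsv n e (j + 1)) * ?I e)
      \<le> expect n p (\<lambda>e. ?A e + ?N e + ?B e + ?C e)"
  proof (rule expect_mono)
    fix e
    show "(1 - epsv n e j) * (1 - epsv n e (j + 1)) * ?I e \<le> ?A e + ?N e + ?B e + ?C e"
      using epsv_01[of n e "j - 1"] epsv_01[of n e j] epsv_01[of n e "j + 1"]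
        epsv_01[of n e "j + 2"] epsv_01[of n e "j + 3"]
      by (auto simp: indW_def)
  qed
  also have "\<dots> = expect n p ?A + expect n p ?N + expect n p ?B + expect n p ?C"
    by (simp only: expect_add)
  also have "\<dots> \<le> q * X' (-1) + q^2 * X' 1 + q * X' 1 + q * X' 2"
  proof (intro add_mono)
    show "expect n p ?A \<le> q * X' (-1)"
      using attach_one[OF n p, of "j - 1" j "j + 1" v] by (simp add: q_def X'_def Xv_def)
    show "expect n p ?N \<le> q^2 * X' 1"
      using fill_gap[OF n p] by (simp add: q_def X'_def)
    show "expect n p ?B \<le> q * X' 1"
      using attach_one[OF n p, of "j + 2" "j + 1" j v] by (simp add: q_def X'_def Xv_def add.assoc mult.commute)
    show "expect n p ?C \<le> q * X' 2"
      using attach_one[OF n p, of "j + 3" "j + 2" "j + 1" v] by (simp add: q_def X'_def Xv_def add.assoc mult.commute)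
  qed
  finally show ?thesis .
qed

lemma zero_pairs_upper:
  assumes n: "n \<ge> 3" and p: "0 < p" "p < 1"
  shows "expect n p (\<lambda>e. zero_pairs n e * indW n v e)
       \<le> (3 * ((1 - p) / p) + ((1 - p) / p)^2) * real (Suc v) * expect n p (indW n (Suc v))"
proof -
  define q where "q = (1 - p) / p"
  let ?X' = "\<lambda>j a. expect n p (\<lambda>e. Xv n e (j + a) * indW n (Suc v) e)"
  have n0: "n > 0" using n by simp
  have "expect n p (\<lambda>e. zero_pairs n e * indW n v e)
      = (\<Sum>j\<in>{1..int n}. expect n p (\<lambda>e. (1 - epsv n e j) * (1 - epsv n e (j + 1)) * indW n v e))"
    unfolding expect_sum[symmetric] zero_pairs_def by (simp add: sum_distrib_right)
  also have "\<dots> \<le> (\<Sum>j\<in>{1..int n}. q * ?X' j (-1) + q^2 * ?X' j 1 + q * ?X' j 1 + q * ?X' j 2)"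
    unfolding q_def by (rule sum_mono) (rule zero_pair_bound[OF n p])
  also have "\<dots> = (3 * q + q^2) * real (Suc v) * expect n p (indW n (Suc v))"
    unfolding sum.distrib sum_distrib_left[symmetric] sum_expect_X[OF n0] by (simp add: algebra_simps)
  finally show ?thesis unfolding q_def .
qed

section \<open>Runs of ones and the number of triples\<close>

definition run :: "nat \<Rightarrow> (int \<Rightarrow> bool) \<Rightarrow> int \<Rightarrow> nat \<Rightarrow> real" where
  "run n e i t = (\<Prod>s<t. epsv n e (i + int s))"

definition run_exact :: "nat \<Rightarrow> (int \<Rightarrow> bool) \<Rightarrow> int \<Rightarrow> nat \<Rightarrow> real" where
  "run_exact n e i t = run n e i t * (1 - epsv n e (i + int t))"

lemma run_Suc: "run n e i (Suc t) = run n e i t * epsv n e (i + int t)"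
  unfolding run_def by simp

lemma run_01: "run n e i t = 0 \<or> run n e i t = 1"
proof (induction t)
  case (Suc t)
  then show ?case using epsv_01[of n e "i + int t"] by (auto simp: run_Suc)
qed (simp add: run_def)

lemma run_nonneg: "0 \<le> run n e i t"
  using run_01[of n e i t] by auto

lemma run_one: "run n e i t \<noteq> 0 \<Longrightarrow> s < t \<Longrightarrow> epsv n e (i + int s) = 1"
  unfolding run_def using epsv_01[of n e "i + int s"] by auto

lemma run_3: "run n e i 3 = Xv n e i * Xv n e (i + 1)"
proof -
  have "run n e i 3 = epsv n e i * epsv n e (i + 1) * epsv n e (i + 2)"
    by (simp add: run_def numeral_3_eq_3)
  then show ?thesis
    using epsv_01[of n e "i + 1"] by (auto simp: Xv_def add.assoc)
qed

lemma run_telescope: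
  "run n e i d - run n e i (d + k) = (\<Sum>t\<in>{d..<d + k}. run_exact n e i t)"
proof (induction k)
  case (Suc k)
  have "run n e i d - run n e i (d + Suc k) = (run n e i d - run n e i (d + k)) + run_exact n e i (d + k)"
    by (simp add: run_Suc run_exact_def algebra_simps)
  then show ?case using Suc by simp
qed simp

lemma run_full:
  assumes n: "n > 0" and full: "run n e i n \<noteq> 0"
  shows "Wv n e = real n"
proof -
  have one: "epsv n e j = 1" for j
  proof -
    define s where "s = nat ((j - i) mod int n)"
    have s: "s < n" "int s = (j - i) mod int n" using n unfolding s_def by (auto simp: nat_less_iff)
    have "(i + (j - i) mod int n) mod int n = j mod int n"
      by (metis add.commute diff_add_cancel mod_add_right_eq)
    then have "site n (i + int s) = site n j"
      unfolding site_eq_iff s(2) .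
    then show ?thesis using run_one[OF full s(1)] by (simp add: epsv_site)
  qed
  show ?thesis unfolding Wv_def Xv_def one by simp
qed

lemma run_upd:
  assumes "\<And>s. s < t \<Longrightarrow> site n (i + int s) \<noteq> site n x"
  shows "run n (e(site n x := b)) i t = run n e i t"
  unfolding run_def using assms by (intro prod.cong) (auto simp: epsv_upd)

text \<open>Switching off the last site of a run of exact length \<open>s + 1 \<ge> 2\<close> lowers \<open>W\<close> by one and
  leaves a run of exact length \<open>s\<close>.\<close>

lemma shorten_run:
  assumes n: "n \<ge> 3" and p: "0 < p" "p < 1" and s: "1 \<le> s" "Suc s < n"
  shows "expect n p (\<lambda>e. run_exact n e i (Suc s) * indW n (Suc v) e)
       \<le> p / (1 - p) * expect n p (\<lambda>e. run_exact n e i s * indW n v e)"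
proof (rule flip_down_bound[where x = "i + int s"])
  fix e
  let ?x = "i + int s" and ?e' = "e(site n (i + int s) := False)"
  have same_run: "run n ?e' i s = run n e i s"
  proof (rule run_upd)
    fix r assume "r < s"
    then show "site n (i + int r) \<noteq> site n ?x" by (intro site_neq) (use s in auto)
  qed
  have "site n (i + int (Suc s)) \<noteq> site n ?x"
    by (rule site_neq) (use n s in auto)
  then have after: "epsv n ?e' (i + int (Suc s)) = epsv n e (i + int (Suc s))" and at: "epsv n ?e' ?x = 0"
    by (simp_all add: epsv_upd)
  show "run_exact n e i (Suc s) * indW n (Suc v) e \<le> run_exact n ?e' i s * indW n v ?e' * epsv n e ?x"
  proof (cases "run_exact n e i (Suc s) * indW n (Suc v) e = 0")
    case True
    have "0 \<le> run_exact n ?e' i s * indW n v ?e' * epsv n e ?x"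
      by (auto intro!: mult_nonneg_nonneg simp: run_exact_def indW_def run_nonneg)
    then show ?thesis using True by linarith
  next
    case False
    then have full: "run n e i (Suc s) \<noteq> 0" and gap: "epsv n e (i + int (Suc s)) = 0"
      and W: "Wv n e = real (Suc v)"
      using epsv_01[of n e "i + int (Suc s)"] by (auto simp: run_exact_def indW_def split: if_splits)
    have ex: "epsv n e ?x = 1" and left: "epsv n e (?x - 1) = 1"
      using run_one[OF full, of s] run_one[OF full, of "s - 1"] s by (auto simp: algebra_simps of_nat_diff)
    then have "e (site n ?x)" by (simp add: epsv_site split: if_splits)
    from W_set_false[where e = e and x = ?x, OF n this] have "Wv n ?e' = real v"
      using W gap left by (simp add: algebra_simps)
    moreover have "run n e i s = 1"
      using full run_01[of n e i s] by (auto simp: run_Suc)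
    ultimately show ?thesis unfolding run_exact_def same_run after
      using gap ex at by (simp add: indW_def run_Suc)
  qed
qed (use n p in \<open>auto simp: indW_def run_exact_def intro!: mult_nonneg_nonneg run_nonneg\<close>)

text \<open>Unless all sites are occupied, a triple at \<open>i\<close> starts a run of a unique exact length \<open>\<ge> 3\<close>.\<close>

lemma triple_as_runs:
  assumes n: "n \<ge> 3" and W: "Wv n e \<noteq> real n"
  shows "run n e i 3 = (\<Sum>s\<in>{2..<n - 1}. run_exact n e i (Suc s))"
proof -
  have "run n e i n = 0" using run_full[of n e i] n W by auto
  then have "run n e i 3 = (\<Sum>t\<in>{3..<n}. run_exact n e i t)"
    using run_telescope[of n e i 3 "n - 3"] n by simp
  also have "\<dots> = (\<Sum>s\<in>{2..<n - 1}. run_exact n e i (Suc s))"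
    using sum.shift_bounds_nat_ivl[of "run_exact n e i" 2 1 "n - 1"] n by simp
  finally show ?thesis .
qed

text \<open>The exact run lengths \<open>\<ge> 2\<close> at \<open>i\<close> are mutually exclusive and all require \<open>X\<^sub>i = 1\<close>.\<close>

lemma run_exact_sum_le: "(\<Sum>s\<in>{2..<m}. run_exact n e i s) \<le> Xv n e i"
proof (cases "m \<le> 2")
  case True
  then show ?thesis by (simp add: Xv_def)
next
  case False
  have m: "2 + (m - 2) = m" using False by simp
  have "(\<Sum>s\<in>{2..<m}. run_exact n e i s) = run n e i 2 - run n e i m"
    using run_telescope[of n e i 2 "m - 2", symmetric] unfolding m .
  also have "\<dots> \<le> Xv n e i"
    using run_nonneg[of n e i m] by (simp add: run_def Xv_def numeral_2_eq_2)
  finally show ?thesis .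
qed

lemma triples_bound:
  assumes n: "n \<ge> 3" and p: "0 < p" "p < 1" and v: "Suc v < n"
  shows "expect n p (\<lambda>e. (\<Sum>i\<in>{1..int n}. run n e i 3) * indW n (Suc v) e)
       \<le> p / (1 - p) * (real v * expect n p (indW n v))"
proof -
  let ?I' = "indW n (Suc v)" and ?I = "indW n v" and ?S = "{2..<n - 1}"
  define q where "q = p / (1 - p)"
  have n0: "n > 0" using n by simp
  have "expect n p (\<lambda>e. (\<Sum>i\<in>{1..int n}. run n e i 3) * ?I' e)
      = expect n p (\<lambda>e. \<Sum>i\<in>{1..int n}. \<Sum>s\<in>?S. run_exact n e i (Suc s) * ?I' e)"
  proof (rule expect_cong)
    fix e
    show "(\<Sum>i\<in>{1..int n}. run n e i 3) * ?I' e = (\<Sum>i\<in>{1..int n}. \<Sum>s\<in>?S. run_exact n e i (Suc s) * ?I' e)"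
      using triple_as_runs[OF n, of e] v by (simp add: indW_def sum_distrib_right)
  qed
  also have "\<dots> \<le> (\<Sum>i\<in>{1..int n}. \<Sum>s\<in>?S. q * expect n p (\<lambda>e. run_exact n e i s * ?I e))"
    unfolding expect_sum q_def
    by (intro sum_mono shorten_run[OF n p]) auto
  also have "\<dots> = q * expect n p (\<lambda>e. (\<Sum>i\<in>{1..int n}. \<Sum>s\<in>?S. run_exact n e i s) * ?I e)"
    by (simp add: expect_sum sum_distrib_left sum_distrib_right)
  also have "\<dots> \<le> q * expect n p (\<lambda>e. Wv n e * ?I e)"
  proof (rule mult_left_mono[OF expect_mono])
    fix e
    have "(\<Sum>i\<in>{1..int n}. \<Sum>s\<in>?S. run_exact n e i s) \<le> Wv n e"
      unfolding Wv_def by (intro sum_mono run_exact_sum_le)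
    then show "(\<Sum>i\<in>{1..int n}. \<Sum>s\<in>?S. run_exact n e i s) * ?I e \<le> Wv n e * ?I e"
      by (simp add: indW_def)
  qed (use p in \<open>simp add: q_def\<close>)
  finally show ?thesis unfolding expect_W q_def .
qed

text \<open>The double sum in the theorem counts every triple twice.\<close>

lemma neighbour_pairs_as_runs:
  assumes n: "n > 0"
  shows "(\<Sum>i\<in>{1..int n}. \<Sum>j\<in>{i - 1, i + 1}. Xv n e i * Xv n e j) = 2 * (\<Sum>i\<in>{1..int n}. run n e i 3)"
proof -
  have "(\<Sum>i\<in>{1..int n}. Xv n e (i + -1 + 1) * Xv n e (i + -1)) = (\<Sum>i\<in>{1..int n}. Xv n e (i + 1) * Xv n e i)"
  proof (rule sum_shift[where f = "\<lambda>k. Xv n e (k + 1) * Xv n e k", OF _ n])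
    fix k
    have "Xv n e (k + int n + 1) = Xv n e (k + 1)"
      using Xv_period[of n e "k + 1"] by (simp add: algebra_simps)
    then show "Xv n e (k + int n + 1) * Xv n e (k + int n) = Xv n e (k + 1) * Xv n e k"
      using Xv_period[of n e k] by simp
  qed
  then show ?thesis by (simp add: sum.distrib run_3 mult.commute)
qed

lemma cond_neighbour_pairs:
  assumes n: "n > 0" and pos: "measure_pmf.prob (eps_pmf n p) {e. Wv n e = real w} > 0"
  shows "(\<Sum>i\<in>{1..int n}. \<Sum>j\<in>{i - 1, i + 1}.
            measure_pmf.expectation (cond_pmf (eps_pmf n p) {e. Wv n e = real w}) (\<lambda>e. Xv n e i * Xv n e j))
       = 2 * expect n p (\<lambda>e. (\<Sum>i\<in>{1..int n}. run n e i 3) * indW n w e) / expect n p (indW n w)"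
proof -
  have pairs: "(\<Sum>i\<in>{1..int n}. \<Sum>j\<in>{i - 1, i + 1}. Xv n e i * Xv n e j) * indW n w e
      = 2 * ((\<Sum>i\<in>{1..int n}. run n e i 3) * indW n w e)" for e
    using neighbour_pairs_as_runs[OF n, of e] by simp
  show ?thesis
    unfolding cond_expectation_W[OF pos] sum_divide_distrib[symmetric] expect_sum[symmetric]
      sum_distrib_right[symmetric] pairs expect_cmult ..
qed

lemma ratio_bound:
  assumes n: "n \<ge> 3" and p: "0 < p" "p < 1/2" and v: "12 * real v \<le> real n"
  shows "expect n p (indW n v) \<le> 16 * real (Suc v) * expect n p (indW n (Suc v)) / (real n * p^2)"
proof -
  let ?a = "expect n p (indW n v)" and ?b = "expect n p (indW n (Suc v))"
  define q where "q = (1 - p) / p"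
  have a0: "0 \<le> ?a" and b0: "0 \<le> ?b" by (auto intro!: expect_nonneg simp: indW_def)
  have q: "0 \<le> q" "q \<le> 1 / p" using p by (auto simp: q_def divide_right_mono)
  have "3 * q + q^2 \<le> 3 * (1 / p) + (1 / p)^2"
    using q by (intro add_mono mult_left_mono power_mono) auto
  also have "\<dots> \<le> 4 / p^2" using p by (simp add: field_simps power2_eq_square)
  finally have q_bound: "3 * q + q^2 \<le> 4 / p^2" .
  have "real n / 4 * ?a \<le> (real n / 3 - real v) * ?a"
    using v a0 by (intro mult_right_mono) auto
  also have "\<dots> \<le> (3 * q + q^2) * real (Suc v) * ?b"
    using zero_pairs_lower[OF n p, of v] zero_pairs_upper[OF n, of p v] p unfolding q_def by simp
  also have "\<dots> \<le> 4 / p^2 * real (Suc v) * ?b"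
    using q_bound b0 by (intro mult_right_mono) auto
  finally show ?thesis using n p by (simp add: field_simps)
qed

lemma triples_given_W:
  assumes n: "n \<ge> 3" and p: "0 < p" "p < 1/2" and w: "0 < w" "20 * real w \<le> real n"
  shows "expect n p (\<lambda>e. (\<Sum>i\<in>{1..int n}. run n e i 3) * indW n w e)
       \<le> 32 * (real w)^2 * expect n p (indW n w) / (real n * p)"
proof -
  obtain v where wv: "w = Suc v" using w(1) gr0_conv_Suc by auto
  let ?a = "expect n p (indW n v)" and ?b = "expect n p (indW n w)"
  have a0: "0 \<le> ?a" by (auto intro!: expect_nonneg simp: indW_def)
  have "p / (1 - p) \<le> 2 * p" using p by (simp add: field_simps)
  then have "p / (1 - p) * (real v * ?a) \<le> 2 * p * (real w * ?a)"
    using wv a0 p by (intro mult_mono mult_right_mono) auto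
  moreover have "?a \<le> 16 * real w * ?b / (real n * p^2)"
    using ratio_bound[OF n p, of v] w wv by simp
  then have "2 * p * (real w * ?a) \<le> 2 * p * (real w * (16 * real w * ?b / (real n * p^2)))"
    using p by (intro mult_left_mono) auto
  moreover have "\<dots> = 32 * (real w)^2 * ?b / (real n * p)"
    using p by (simp add: field_simps power2_eq_square)
  ultimately show ?thesis
    using triples_bound[OF n, of p v] p w wv by simp
qed

text \<open>The theorem holds with \<open>c = 1/10\<close> and \<open>C = 64\<close>.\<close>

theorem mainTheorem6:
  "\<exists>c::real. \<exists>C::real. c > 0 \<and> C > 0 \<and>
     (\<forall>(n::nat) (p::real) (w::nat).
        n > 10 \<longrightarrow> 0 < p \<longrightarrow> p < 1/2 \<longrightarrow> 0 < w \<longrightarrow> real w \<le> c * real n * p \<longrightarrow>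
        measure_pmf.prob (eps_pmf n p) {e. Wv n e = real w} > 0 \<longrightarrow>
        (\<Sum>i\<in>{1..int n}. \<Sum>j\<in>{i - 1, i + 1}.
            measure_pmf.expectation (cond_pmf (eps_pmf n p) {e. Wv n e = real w})
              (\<lambda>e. Xv n e i * Xv n e j))
        \<le> C / (real n * p) * (real w)^2)"
proof (intro exI conjI allI impI)
  fix n :: nat and p :: real and w :: nat
  assume n: "n > 10" and p: "0 < p" "p < 1/2" and w: "0 < w" "real w \<le> 1/10 * real n * p"
    and pos: "measure_pmf.prob (eps_pmf n p) {e. Wv n e = real w} > 0"
  let ?b = "expect n p (indW n w)"
  have b: "?b > 0" using pos unfolding prob_W .
  have "1/10 * real n * p \<le> 1/10 * real n * (1/2)" using p by (intro mult_left_mono) auto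
  then have w_small: "20 * real w \<le> real n" using w by linarith
  have "(\<Sum>i\<in>{1..int n}. \<Sum>j\<in>{i - 1, i + 1}.
          measure_pmf.expectation (cond_pmf (eps_pmf n p) {e. Wv n e = real w}) (\<lambda>e. Xv n e i * Xv n e j))
      = 2 * expect n p (\<lambda>e. (\<Sum>i\<in>{1..int n}. run n e i 3) * indW n w e) / ?b"
    using cond_neighbour_pairs[OF _ pos] n by simp
  also have "\<dots> \<le> 2 * (32 * (real w)^2 * ?b / (real n * p)) / ?b"
    using triples_given_W[of n p w] n p w w_small b by (intro divide_right_mono) auto
  also have "\<dots> = 64 / (real n * p) * (real w)^2"
    using b by simp
  finally show "(\<Sum>i\<in>{1..int n}. \<Sum>j\<in>{i - 1, i + 1}.
          measure_pmf.expectation (cond_pmf (eps_pmf n p) {e. Wv n e = real w}) (\<lambda>e. Xv n e i * Xv n e j))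
      \<le> 64 / (real n * p) * (real w)^2" .
qed simp_all

end
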